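(* Let $L>0$ and $c_0>0$. Assume: [A1] there exist constants $C_L>0$ and $\varepsilon_L\in(0,1)$ such that $P\bigl[\sup_{u\in V_T(r)}\mathbb Z_T(u)\ge \exp(-r^{2-\varepsilon_L})\bigr]\le C_L/r^L$ for all $r>0$ and all $T\in\mathbb T$; [A2] $p$ is differentiable on $\mathbb R\setminus\{0\}$; [A3] there is $\varepsilon>0$ with $\sup_{-\varepsilon<x<\varepsilon}p(x)<\infty$; [A4] for every $j\in\mathcal J^{(1)}$, $\sup_{T\in\mathbb T}|\alpha_T^j\xi_T^j|\le c_0$ almost surely. Then there exist constants $C'_L>0$ and $\varepsilon'_L\in(0,1)$ such that $$P\Bigl[\sup_{u\in V_T(r)}\mathbb Z^\dagger_T(u)\ge \exp(-r^{2-\varepsilon'_L})\Bigr]\le \frac{C'_L}{r^L}$$ for all $r>0$ and all $T\in\mathbb T$.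
   Context: Let $\Theta\subset\mathbb R^{\mathsf p}$ be a bounded open set with closure $\overline\Theta$ and let $\theta^*\in\Theta$. Let $(\Omega,\mathcal F,P)$ be a probability space and $\mathbb T\subset\mathbb R_{\ge0}$ with $\sup\mathbb T=\infty$. For each $T\in\mathbb T$, $\mathbb H_T:\Omega\times\overline\Theta\to\mathbb R$ is a random field such that $\theta\mapsto\mathbb H_T(\theta)$ is continuous for every $\omega$. The penalty is $p_T(\theta)=\sum_{j=1}^{\mathsf p}\xi_T^j p(\theta_j)$ where $\xi_T^j>0$ are (possibly random) positive quantities and $p:\mathbb R\to\mathbb R_{\ge0}$ satisfies $p(0)=0$; put $\mathbb H^\dagger_T=\mathbb H_T-p_T$. Let $\mathcal J^{(0)}=\{j:\theta^*_j=0\}$, $\mathcal J^{(1)}=\{j:\theta^*_j\neq0\}$. Let $a_T=\mathrm{diag}(\alpha_T^1,\dots,\alpha_T^{\mathsf p})$ be a deterministic invertible diagonal matrix with $\|a_T\|\to0$ as $T\to\infty$, where $\|A\|$ is the square root of the largest eigenvalue of $A'A$. Let $\mathbb U_T=\{u\in\mathbb R^{\mathsf p}:\theta^*+a_Tu\in\overline\Theta\}$, $\mathbb Z_T(u)=\exp(\mathbb H_T(\theta^*+a_Tu)-\mathbb H_T(\theta^* ))$ and $\mathbb Z^\dagger_T(u)=\exp(\mathbb H^\dagger_T(\theta^*+a_Tu)-\mathbb H^\dagger_T(\theta^* ))$ for $u\in\mathbb U_T$, and $V_T(r)=\{u\in\mathbb U_T:|u|\ge r\}$. The supremum over the empty set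 is $-\infty$ by convention. *)

theory Defs
  imports "HOL-Probability.Probability"
begin

definition outer_prob :: "'w measure \<Rightarrow> 'w set \<Rightarrow> real" where
  "outer_prob M A = Inf {measure M B | B. B \<in> sets M \<and> A \<subseteq> B}"

definition diag_scale :: "('p::finite \<Rightarrow> real) \<Rightarrow> real^'p \<Rightarrow> real^'p" where
  "diag_scale al u = (\<chi> j. al j * u $ j)"

definition Uset :: "(real^'p::finite) set \<Rightarrow> real^'p \<Rightarrow> ('p \<Rightarrow> real) \<Rightarrow> (real^'p) set" where
  "Uset Th ts al = {u. ts + diag_scale al u \<in> closure Th}"

definition Vset :: "(real^'p::finite) set \<Rightarrow> real^'p \<Rightarrow> ('p \<Rightarrow> real) \<Rightarrow> real \<Rightarrow> (real^'p) set" where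
  "Vset Th ts al r = {u \<in> Uset Th ts al. norm u \<ge> r}"

definition Zfield :: "(real^'p::finite \<Rightarrow> real) \<Rightarrow> real^'p \<Rightarrow> ('p \<Rightarrow> real) \<Rightarrow> real^'p \<Rightarrow> real" where
  "Zfield G ts al u = exp (G (ts + diag_scale al u) - G ts)"

definition penalty :: "('p::finite \<Rightarrow> real) \<Rightarrow> (real \<Rightarrow> real) \<Rightarrow> real^'p \<Rightarrow> real" where
  "penalty xi p th = (\<Sum>j\<in>UNIV. xi j * p (th $ j))"

end

theory Submission
  imports Defs
begin

text \<open>
  At a coordinate with \<open>\<theta>\<^sup>*\<^sub>j = 0\<close> the penalty can only grow, since \<open>p \<ge> 0 = p 0\<close>; at one with
  \<open>\<theta>\<^sup>*\<^sub>j \<noteq> 0\<close>, differentiability of \<open>p\<close> makes its drop at most linear in the step \<open>\<alpha>\<^sup>j\<^sub>T u\<^sub>j\<close>,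
  and the weight \<open>\<xi>\<^sup>j\<^sub>T\<close> turns this into \<open>c\<^sub>0 K\<^sub>j \<bar>u\<^sub>j\<bar>\<close>. Hence, off a null set,
  \<open>Z\<^sup>\<dagger>\<^sub>T(u) \<le> Z\<^sub>T(u) exp (K \<bar>u\<bar>)\<close>.
  If the supremum of \<open>Z\<^sup>\<dagger>\<^sub>T\<close> over \<open>V\<^sub>T(r)\<close> reaches \<open>exp (- r\<^bsup>2-\<epsilon>'\<^esup>)\<close>, some \<open>u\<close> in a dyadic
  shell \<open>2\<^sup>k r \<le> \<bar>u\<bar> < 2\<^bsup>k+1\<^esup> r\<close> has \<open>Z\<^sub>T(u) \<ge> exp (- (2\<^sup>k r)\<^bsup>2-\<epsilon>\<^sub>L\<^esup>)\<close> once \<open>r\<close> is large,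
  because the gap between the exponents \<open>2 - \<epsilon>\<^sub>L > 2 - \<epsilon>'\<close> absorbs the linear term.
  As \<open>U\<^sub>T\<close> is bounded only finitely many shells occur, and the bounds \<open>C\<^sub>L / (2\<^sup>k r)\<^sup>L\<close>
  form a geometric series.
\<close>

lemma outer_prob_le_measure: "B \<in> sets M \<Longrightarrow> A \<subseteq> B \<Longrightarrow> outer_prob M A \<le> measure M B"
  unfolding outer_prob_def by (rule cInf_lower) (auto intro: bdd_belowI[of _ 0])

lemma outer_prob_le_1: "prob_space M \<Longrightarrow> A \<subseteq> space M \<Longrightarrow> outer_prob M A \<le> 1"
  using outer_prob_le_measure[of "space M" M A] prob_space.prob_space by fastforce

lemma outer_prob_null: "N \<in> null_sets M \<Longrightarrow> A \<subseteq> N \<Longrightarrow> outer_prob M A \<le> 0"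
  using outer_prob_le_measure[of N M A] by (simp add: measure_def null_sets_def)

lemma outer_prob_greatest:
  assumes "A \<subseteq> space M" and "\<And>B. B \<in> sets M \<Longrightarrow> A \<subseteq> B \<Longrightarrow> x \<le> measure M B"
  shows "x \<le> outer_prob M A"
  unfolding outer_prob_def using assms by (intro cInf_greatest) auto

lemma outer_prob_mono:
  "A \<subseteq> A' \<Longrightarrow> A' \<subseteq> space M \<Longrightarrow> outer_prob M A \<le> outer_prob M A'"
  by (rule outer_prob_greatest) (auto intro: outer_prob_le_measure)

lemma outer_prob_Un:
  assumes A: "A \<subseteq> space M" and A': "A' \<subseteq> space M"
  shows "outer_prob M (A \<union> A') \<le> outer_prob M A + outer_prob M A'"
proof -
  have "outer_prob M (A \<union> A') - measure M B' \<le> outer_prob M A"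
    if B': "B' \<in> sets M" "A' \<subseteq> B'" for B'
  proof (rule outer_prob_greatest[OF A])
    fix B assume B: "B \<in> sets M" "A \<subseteq> B"
    have "outer_prob M (A \<union> A') \<le> measure M (B \<union> B')"
      using B B' by (intro outer_prob_le_measure) auto
    also have "\<dots> \<le> measure M B + measure M B'"
      using B B' by (intro measure_Un_le) auto
    finally show "outer_prob M (A \<union> A') - measure M B' \<le> measure M B" by simp
  qed
  then have "outer_prob M (A \<union> A') - outer_prob M A \<le> outer_prob M A'"
    by (intro outer_prob_greatest[OF A']) fastforce
  then show ?thesis by simp
qed

lemma outer_prob_UN_le_sum:
  assumes "finite I" and "\<And>i. i \<in> I \<Longrightarrow> A i \<subseteq> space M"
  shows "outer_prob M (\<Union>i\<in>I. A i) \<le> (\<Sum>i\<in>I. outer_prob M (A i))"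
  using assms
proof (induction I rule: finite_induct)
  case empty
  show ?case using outer_prob_null[of "{}" M "{}"] by simp
next
  case (insert i I)
  have "outer_prob M (\<Union>k\<in>insert i I. A k) \<le> outer_prob M (A i) + outer_prob M (\<Union>k\<in>I. A k)"
    using insert.prems by (auto intro: outer_prob_Un)
  then show ?case using insert by simp
qed

lemma nonneg_drop_le_linear:
  fixes p :: "real \<Rightarrow> real"
  assumes p_nonneg: "\<And>x. p x \<ge> 0" and diff: "p differentiable (at t)"
  shows "\<exists>K\<ge>0. \<forall>h. p t - p (t + h) \<le> K * \<bar>h\<bar>"
proof -
  obtain D where "(p has_real_derivative D) (at t)"
    using diff real_differentiable_def by blast
  then have "((\<lambda>y. (p y - p t) / (y - t)) \<longlongrightarrow> D) (at t)"
    using has_field_derivative_iff by blast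
  then have "eventually (\<lambda>y. dist ((p y - p t) / (y - t)) D < 1) (at t)"
    by (rule tendstoD) simp
  then obtain d where d: "d > 0" and quot:
    "\<And>y. y \<noteq> t \<Longrightarrow> dist y t < d \<Longrightarrow> dist ((p y - p t) / (y - t)) D < 1"
    unfolding eventually_at by blast
  define K where "K = \<bar>D\<bar> + 1 + p t / d"
  have "p t - p (t + h) \<le> K * \<bar>h\<bar>" for h
  proof (cases "\<bar>h\<bar> < d")
    case True
    have "\<bar>p (t + h) - p t\<bar> \<le> (\<bar>D\<bar> + 1) * \<bar>h\<bar>"
    proof (cases "h = 0")
      case False
      then have "\<bar>(p (t + h) - p t) / h - D\<bar> < 1"
        using quot[of "t + h"] True by (simp add: dist_real_def)
      then have "\<bar>(p (t + h) - p t) / h\<bar> \<le> \<bar>D\<bar> + 1" by arith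
      then show ?thesis using False by (simp add: abs_divide divide_le_eq)
    qed simp
    moreover have "0 \<le> p t / d * \<bar>h\<bar>" using p_nonneg d by simp
    ultimately show ?thesis unfolding K_def by (simp add: algebra_simps)
  next
    case False
    have "d * p t \<le> \<bar>h\<bar> * p t" using False p_nonneg[of t] by (simp add: mult_right_mono)
    then have "p t \<le> p t / d * \<bar>h\<bar>" using d by (simp add: field_simps)
    then have "p t - p (t + h) \<le> p t / d * \<bar>h\<bar>" using p_nonneg[of "t + h"] by linarith
    also have "\<dots> \<le> K * \<bar>h\<bar>" unfolding K_def by (intro mult_right_mono) auto
    finally show ?thesis .
  qed
  moreover have "K \<ge> 0" unfolding K_def using d p_nonneg[of t] by simp
  ultimately show ?thesis by blast
qed

lemma penalty_drop_le_norm: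
  fixes ts :: "real^'p::finite" and p :: "real \<Rightarrow> real"
  assumes p_nonneg: "\<And>x. p x \<ge> 0" and p0: "p 0 = 0" and c0: "c0 \<ge> 0"
    and diff: "\<And>j. ts $ j \<noteq> 0 \<Longrightarrow> p differentiable (at (ts $ j))"
  shows "\<exists>K\<ge>0. \<forall>xi al u. (\<forall>j. xi j > 0) \<longrightarrow> (\<forall>j. ts $ j \<noteq> 0 \<longrightarrow> \<bar>al j * xi j\<bar> \<le> c0) \<longrightarrow>
           penalty xi p ts - penalty xi p (ts + diag_scale al u) \<le> K * norm u"
proof -
  have "\<forall>j. \<exists>K\<ge>0. \<forall>h. p (ts $ j) - p (ts $ j + h) \<le> K * \<bar>h\<bar>"
  proof
    fix j show "\<exists>K\<ge>0. \<forall>h. p (ts $ j) - p (ts $ j + h) \<le> K * \<bar>h\<bar>"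
    proof (cases "ts $ j = 0")
      case True then show ?thesis using p0 p_nonneg by (intro exI[of _ 0]) auto
    qed (use nonneg_drop_le_linear[OF p_nonneg diff] in blast)
  qed
  then obtain Kj where Kj0: "\<And>j. Kj j \<ge> 0"
    and Kj: "\<And>j h. p (ts $ j) - p (ts $ j + h) \<le> Kj j * \<bar>h\<bar>"
    by metis
  have "penalty xi p ts - penalty xi p (ts + diag_scale al u) \<le> (c0 * sum Kj UNIV) * norm u"
    if xi: "\<forall>j. xi j > 0" and small: "\<forall>j. ts $ j \<noteq> 0 \<longrightarrow> \<bar>al j * xi j\<bar> \<le> c0" for xi al u
  proof -
    have coord: "xi j * (p (ts $ j) - p (ts $ j + al j * u $ j)) \<le> c0 * Kj j * norm u" for j
    proof (cases "ts $ j = 0")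
      case True
      have "0 \<le> xi j * p (ts $ j + al j * u $ j)" using xi p_nonneg by (simp add: less_imp_le)
      moreover have "0 \<le> c0 * Kj j * norm u" using c0 Kj0 by simp
      ultimately show ?thesis using True p0 by simp
    next
      case False
      have "xi j * (p (ts $ j) - p (ts $ j + al j * u $ j)) \<le> xi j * (Kj j * \<bar>al j * u $ j\<bar>)"
        using xi Kj by (simp add: mult_left_mono)
      also have "\<dots> = Kj j * \<bar>al j * xi j\<bar> * \<bar>u $ j\<bar>"
        using xi[rule_format, of j] by (simp add: abs_mult)
      also have "\<dots> \<le> Kj j * c0 * norm u"
        using small False Kj0 c0 component_le_norm_cart[of u j]
        by (intro mult_mono mult_left_mono) auto
      finally show ?thesis by (simp add: mult_ac)
    qed
    have "penalty xi p ts - penalty xi p (ts + diag_scale al u)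
        = (\<Sum>j\<in>UNIV. xi j * (p (ts $ j) - p (ts $ j + al j * u $ j)))"
      unfolding penalty_def diag_scale_def by (simp add: sum_subtractf[symmetric] algebra_simps)
    also have "\<dots> \<le> (\<Sum>j\<in>UNIV. c0 * Kj j * norm u)" by (intro sum_mono coord)
    also have "\<dots> = (c0 * sum Kj UNIV) * norm u" by (simp add: sum_distrib_left sum_distrib_right)
    finally show ?thesis .
  qed
  moreover have "c0 * sum Kj UNIV \<ge> 0" using c0 Kj0 by (simp add: sum_nonneg)
  ultimately show ?thesis by blast
qed

lemma Zfield_diff_le:
  assumes "P ts - P (ts + diag_scale al u) \<le> c"
  shows "Zfield (\<lambda>th. G th - P th) ts al u \<le> Zfield G ts al u * exp c"
proof -
  have "Zfield (\<lambda>th. G th - P th) ts al u = Zfield G ts al u * exp (P ts - P (ts + diag_scale al u))"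
    unfolding Zfield_def by (simp add: exp_add[symmetric] algebra_simps)
  then show ?thesis using assms by (simp add: Zfield_def)
qed

lemma linear_diag_scale: "linear (diag_scale al)"
  by (rule linearI) (simp_all add: diag_scale_def vec_eq_iff algebra_simps)

lemma bounded_Uset:
  assumes "bounded Th" and "\<And>j. al j \<noteq> 0"
  shows "bounded (Uset Th ts al)"
proof -
  have "Uset Th ts al \<subseteq> diag_scale (\<lambda>j. inverse (al j)) ` ((\<lambda>x. x - ts) ` closure Th)"
  proof
    fix u assume "u \<in> Uset Th ts al"
    moreover have "u = diag_scale (\<lambda>j. inverse (al j)) ((ts + diag_scale al u) - ts)"
      using assms(2) by (simp add: diag_scale_def vec_eq_iff)
    ultimately show "u \<in> diag_scale (\<lambda>j. inverse (al j)) ` ((\<lambda>x. x - ts) ` closure Th)"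
      unfolding Uset_def by blast
  qed
  moreover have "bounded ((\<lambda>x. x - ts) ` closure Th)"
    using assms(1) bounded_translation_minus bounded_closure by blast
  ultimately show ?thesis
    using bounded_linear_image linear_diag_scale linear_conv_bounded_linear bounded_subset by metis
qed

lemma powr_dominates_linear:
  fixes a b C :: real
  assumes "1 \<le> b" "b < a" "0 \<le> C"
  shows "\<exists>R0\<ge>1. \<forall>s\<ge>R0. s powr b + C * s \<le> s powr a"
proof -
  define R0 where "R0 = max 1 ((1 + C) powr (1 / (a - b)))"
  have "s powr b + C * s \<le> s powr a" if s: "s \<ge> R0" for s
  proof -
    have s1: "s \<ge> 1" using s unfolding R0_def by simp
    have "1 + C = ((1 + C) powr (1 / (a - b))) powr (a - b)"
      using assms by (simp add: powr_powr)
    also have "\<dots> \<le> s powr (a - b)"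
      using s assms unfolding R0_def by (intro powr_mono2) auto
    finally have gap: "1 + C \<le> s powr (a - b)" .
    have "s = s powr 1" using s1 by simp
    also have "\<dots> \<le> s powr b" using s1 assms by (intro powr_mono) auto
    finally have "s powr b + C * s \<le> s powr b * (1 + C)"
      using assms by (simp add: algebra_simps mult_left_mono)
    also have "\<dots> \<le> s powr b * s powr (a - b)" using gap by (simp add: mult_left_mono)
    also have "\<dots> = s powr a" using s1 by (simp add: powr_add[symmetric])
    finally show ?thesis .
  qed
  then show ?thesis by (intro exI[of _ R0]) (auto simp: R0_def)
qed

lemma dyadic_shell:
  fixes r s :: real
  assumes "r \<le> s" "s < 2 ^ n * r"
  shows "\<exists>k<n. 2 ^ k * r \<le> s \<and> s < 2 ^ Suc k * r"
  using assms
proof (induction n)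
  case (Suc n)
  show ?case
  proof (cases "s < 2 ^ n * r")
    case True then show ?thesis using Suc by (meson less_Suc_eq)
  qed (use Suc in auto)
qed simp

lemma sum_dyadic_powr_le:
  fixes C L r :: real
  assumes "C \<ge> 0" "L > 0" "r > 0"
  shows "(\<Sum>k<n. C / (2 ^ k * r) powr L) \<le> C / (1 - 2 powr - L) / r powr L"
proof -
  define q :: real where "q = 2 powr - L"
  have q: "0 < q" "q < 1" unfolding q_def using assms by (auto intro: powr_less_one)
  have "(\<Sum>k<n. C / (2 ^ k * r) powr L) = C / r powr L * (\<Sum>k<n. q ^ k)"
    unfolding sum_distrib_left
    by (intro sum.cong) (use assms in \<open>simp_all add: powr_mult q_def powr_minus
          powr_realpow[symmetric] powr_powr mult.commute power_inverse field_simps\<close>)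
  also have "\<dots> = C / r powr L * ((1 - q ^ n) / (1 - q))" using q by (simp add: sum_gp_strict)
  also have "\<dots> \<le> C / r powr L * (1 / (1 - q))"
    using q assms by (intro mult_left_mono divide_right_mono) auto
  finally show ?thesis unfolding q_def by (simp add: mult.commute)
qed

definition sup_tail_event ::
    "'w measure \<Rightarrow> ('w \<Rightarrow> 'u::real_normed_vector \<Rightarrow> real) \<Rightarrow> 'u set \<Rightarrow> real \<Rightarrow> real \<Rightarrow> 'w set" where
  "sup_tail_event M Z U r c =
     {\<omega> \<in> space M. (SUP u\<in>{u \<in> U. norm u \<ge> r}. ereal (Z \<omega> u)) \<ge> ereal c}"

lemma dyadic_shell_witness:
  fixes f g :: "'u::real_normed_vector \<Rightarrow> real"
  assumes K: "K \<ge> 0" and dom: "\<And>u. u \<in> U \<Longrightarrow> g u \<le> f u * exp (K * norm u)"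
    and growth: "\<And>s. s \<ge> R0 \<Longrightarrow> s powr b + (1 + 2 * K) * s \<le> s powr a"
    and R0: "R0 \<ge> 1" and b: "b \<ge> 0" and r: "r \<ge> R0"
    and U_bound: "\<And>u. u \<in> U \<Longrightarrow> norm u < 2 ^ n * r"
    and large: "(SUP u\<in>{u \<in> U. norm u \<ge> r}. ereal (g u)) \<ge> ereal (exp (- (r powr b)))"
  shows "\<exists>k<n. (SUP u\<in>{u \<in> U. norm u \<ge> 2 ^ k * r}. ereal (f u))
                  \<ge> ereal (exp (- ((2 ^ k * r) powr a)))"
proof -
  define c where "c = exp (- (r powr b))"
  \<comment> \<open>the supremum need not be attained; the factor 2 lost here is absorbed by \<open>ln 2 \<le> s\<close>\<close>
  have "ereal (c / 2) < ereal c" unfolding c_def by simp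
  also have "\<dots> \<le> (SUP u\<in>{u \<in> U. norm u \<ge> r}. ereal (g u))" using large unfolding c_def .
  finally obtain u where u: "u \<in> U" "r \<le> norm u" and gu: "c / 2 < g u"
    unfolding less_SUP_iff by auto
  obtain k where k: "k < n" "2 ^ k * r \<le> norm u" "norm u < 2 ^ Suc k * r"
    using dyadic_shell[OF u(2) U_bound[OF u(1)]] by blast
  define s where "s = 2 ^ k * r"
  have "r \<le> s" unfolding s_def using r R0 by simp
  then have s: "R0 \<le> s" "1 \<le> s" using r R0 by linarith+
  have "r powr b + ln 2 + K * norm u \<le> s powr b + 1 * s + 2 * K * s"
  proof (intro add_mono)
    show "r powr b \<le> s powr b" using \<open>r \<le> s\<close> r R0 b by (intro powr_mono2) auto
    show "ln 2 \<le> 1 * s" using ln_2_less_1 s by simp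
    have "K * norm u \<le> K * (2 * s)" using k(3) K unfolding s_def by (intro mult_left_mono) auto
    then show "K * norm u \<le> 2 * K * s" by simp
  qed
  also have "\<dots> \<le> s powr a" using growth[OF s(1)] by (simp add: algebra_simps)
  finally have "exp (- (s powr a)) \<le> exp (- (r powr b + ln 2 + K * norm u))" by simp
  also have "\<dots> = c / 2 * exp (- (K * norm u))"
    unfolding c_def by (simp add: exp_diff exp_add exp_minus field_simps)
  also have "\<dots> \<le> f u"
    using gu dom[OF u(1)] by (simp add: exp_minus field_simps)
  finally have "ereal (exp (- (s powr a))) \<le> (SUP u\<in>{u \<in> U. norm u \<ge> s}. ereal (f u))"
    using u(1) k(2) unfolding s_def by (intro SUP_upper2[of u]) auto
  then show ?thesis using k(1) unfolding s_def by blast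
qed

lemma sup_tail_event_subset_space: "sup_tail_event M Z U r c \<subseteq> space M"
  unfolding sup_tail_event_def by blast

lemma sup_tail_event_subset_dyadic:
  fixes Z Z' :: "'w \<Rightarrow> 'u::real_normed_vector \<Rightarrow> real"
  assumes K: "K \<ge> 0"
    and dom: "\<And>\<omega> u. \<omega> \<in> space M - N \<Longrightarrow> u \<in> U \<Longrightarrow> Z' \<omega> u \<le> Z \<omega> u * exp (K * norm u)"
    and growth: "\<And>s. s \<ge> R0 \<Longrightarrow> s powr b + (1 + 2 * K) * s \<le> s powr a"
    and R0: "R0 \<ge> 1" and b: "b \<ge> 0" and r: "r \<ge> R0"
    and U_bound: "\<And>u. u \<in> U \<Longrightarrow> norm u < 2 ^ n * r"
  shows "sup_tail_event M Z' U r (exp (- (r powr b)))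
           \<subseteq> N \<union> (\<Union>k<n. sup_tail_event M Z U (2 ^ k * r) (exp (- ((2 ^ k * r) powr a))))"
proof
  fix \<omega> assume \<omega>: "\<omega> \<in> sup_tail_event M Z' U r (exp (- (r powr b)))"
  show "\<omega> \<in> N \<union> (\<Union>k<n. sup_tail_event M Z U (2 ^ k * r) (exp (- ((2 ^ k * r) powr a))))"
  proof (cases "\<omega> \<in> N")
    case False
    then have \<omega>_good: "\<omega> \<in> space M - N"
      using \<omega> sup_tail_event_subset_space[of M Z' U r] by blast
    have "ereal (exp (- (r powr b))) \<le> (SUP u\<in>{u \<in> U. norm u \<ge> r}. ereal (Z' \<omega> u))"
      using \<omega> unfolding sup_tail_event_def by blast
    then have "\<exists>k<n. (SUP u\<in>{u \<in> U. norm u \<ge> 2 ^ k * r}. ereal (Z \<omega> u))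
                 \<ge> ereal (exp (- ((2 ^ k * r) powr a)))"
      using dyadic_shell_witness[OF K dom[OF \<omega>_good] growth R0 b r U_bound] by blast
    then show ?thesis using \<omega>_good unfolding sup_tail_event_def by blast
  qed simp
qed

lemma sup_tail_bound_large_radius:
  fixes Z Z' :: "'w \<Rightarrow> 'u::real_normed_vector \<Rightarrow> real"
  assumes U: "bounded U" and K: "K \<ge> 0" and N: "N \<in> null_sets M"
    and dom: "\<And>\<omega> u. \<omega> \<in> space M - N \<Longrightarrow> u \<in> U \<Longrightarrow> Z' \<omega> u \<le> Z \<omega> u * exp (K * norm u)"
    and tail: "\<And>r. r > 0 \<Longrightarrow> outer_prob M (sup_tail_event M Z U r (exp (- (r powr a)))) \<le> C / r powr L"
    and growth: "\<And>s. s \<ge> R0 \<Longrightarrow> s powr b + (1 + 2 * K) * s \<le> s powr a"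
    and R0: "R0 \<ge> 1" and b: "b \<ge> 0" and L: "L > 0" and C: "C \<ge> 0" and r: "r \<ge> R0"
  shows "outer_prob M (sup_tail_event M Z' U r (exp (- (r powr b)))) \<le> C / (1 - 2 powr - L) / r powr L"
proof -
  have r_pos: "r > 0" using r R0 by simp
  obtain B where B: "\<And>u. u \<in> U \<Longrightarrow> norm u \<le> B" using U bounded_iff by blast
  obtain n where "B / r < 2 ^ n" using real_arch_pow[of 2 "B / r"] by auto
  then have U_bound: "\<And>u. u \<in> U \<Longrightarrow> norm u < 2 ^ n * r"
    using B r_pos by (force simp: divide_less_eq)
  define A where "A k = sup_tail_event M Z U (2 ^ k * r) (exp (- ((2 ^ k * r) powr a)))" for k :: nat
  have A_space: "\<And>k. A k \<subseteq> space M" unfolding A_def by (rule sup_tail_event_subset_space)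
  have N_space: "N \<subseteq> space M" using N null_setsD2 sets.sets_into_space by blast
  have "outer_prob M (sup_tail_event M Z' U r (exp (- (r powr b))))
      \<le> outer_prob M (N \<union> (\<Union>k<n. A k))"
    using sup_tail_event_subset_dyadic[where M = M and N = N and Z = Z and Z' = Z',
        OF K dom growth R0 b r U_bound] A_space N_space
    unfolding A_def by (intro outer_prob_mono) auto
  also have "\<dots> \<le> outer_prob M N + (\<Sum>k<n. outer_prob M (A k))"
    using A_space N_space outer_prob_UN_le_sum[of "{..<n}" A M]
    by (intro order.trans[OF outer_prob_Un]) auto
  also have "\<dots> \<le> 0 + (\<Sum>k<n. C / (2 ^ k * r) powr L)"
    using outer_prob_null[OF N] tail r_pos unfolding A_def by (intro add_mono sum_mono) auto
  also have "\<dots> \<le> C / (1 - 2 powr - L) / r powr L" using sum_dyadic_powr_le[OF C L r_pos] by simp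
  finally show ?thesis .
qed

lemma sup_tail_bound_transfer:
  fixes Z Z' :: "'w \<Rightarrow> 'u::real_normed_vector \<Rightarrow> real"
  assumes M: "prob_space M" and U: "bounded U" and K: "K \<ge> 0" and N: "N \<in> null_sets M"
    and dom: "\<And>\<omega> u. \<omega> \<in> space M - N \<Longrightarrow> u \<in> U \<Longrightarrow> Z' \<omega> u \<le> Z \<omega> u * exp (K * norm u)"
    and tail: "\<And>r. r > 0 \<Longrightarrow> outer_prob M (sup_tail_event M Z U r (exp (- (r powr a)))) \<le> C / r powr L"
    and growth: "\<And>s. s \<ge> R0 \<Longrightarrow> s powr b + (1 + 2 * K) * s \<le> s powr a"
    and R0: "R0 \<ge> 1" and b: "b \<ge> 0" and L: "L > 0" and C: "C \<ge> 0" and r: "r > 0"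
  shows "outer_prob M (sup_tail_event M Z' U r (exp (- (r powr b))))
           \<le> (C / (1 - 2 powr - L) + R0 powr L) / r powr L"
proof (cases "r < R0")
  case True
  have "outer_prob M (sup_tail_event M Z' U r (exp (- (r powr b)))) \<le> 1"
    by (rule outer_prob_le_1[OF M sup_tail_event_subset_space])
  also have "\<dots> \<le> R0 powr L / r powr L" using True r L by (simp add: powr_mono2)
  also have "\<dots> \<le> (C / (1 - 2 powr - L) + R0 powr L) / r powr L"
    using C L r powr_less_one[of 2 "- L"] by (intro divide_right_mono) auto
  finally show ?thesis .
next
  case False
  then have "outer_prob M (sup_tail_event M Z' U r (exp (- (r powr b))))
      \<le> C / (1 - 2 powr - L) / r powr L"
    by (intro sup_tail_bound_large_radius[OF U K N dom tail growth R0 b L C]) auto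
  also have "\<dots> \<le> (C / (1 - 2 powr - L) + R0 powr L) / r powr L"
    using r by (intro divide_right_mono) auto
  finally show ?thesis .
qed

theorem theorem1:
  fixes M :: "'w measure"
    and Th :: "(real^'p::finite) set"
    and ts :: "real^'p"
    and TT :: "real set"
    and H :: "real \<Rightarrow> 'w \<Rightarrow> real^'p \<Rightarrow> real"
    and xi :: "real \<Rightarrow> 'w \<Rightarrow> 'p \<Rightarrow> real"
    and p :: "real \<Rightarrow> real"
    and al :: "real \<Rightarrow> 'p \<Rightarrow> real"
    and L c0 :: real
  assumes M: "prob_space M"
    and Th_open: "open Th" and Th_bdd: "bounded Th" and ts_in: "ts \<in> Th"
    and TT_nonneg: "TT \<subseteq> {0..}" and TT_unbdd: "\<forall>x. \<exists>T\<in>TT. T > x"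
    and H_cont: "\<forall>T\<in>TT. \<forall>\<omega>\<in>space M. continuous_on (closure Th) (H T \<omega>)"
    and xi_pos: "\<forall>T\<in>TT. \<forall>\<omega>\<in>space M. \<forall>j. xi T \<omega> j > 0"
    and p_nonneg: "\<forall>x. p x \<ge> 0" and p0: "p 0 = 0"
    and al_nz: "\<forall>T\<in>TT. \<forall>j. al T j \<noteq> 0"
    and al_lim: "\<forall>e>0. \<exists>T0. \<forall>T\<in>TT. T \<ge> T0 \<longrightarrow> onorm (diag_scale (al T)) < e"
    and L_pos: "L > 0" and c0_pos: "c0 > 0"
    and A1: "\<exists>CL>0. \<exists>eL. 0 < eL \<and> eL < 1 \<and>
              (\<forall>r>0. \<forall>T\<in>TT.
                 outer_prob M {\<omega> \<in> space M.
                   (SUP u\<in>Vset Th ts (al T) r. ereal (Zfield (H T \<omega>) ts (al T) u))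
                     \<ge> ereal (exp (- (r powr (2 - eL))))}
                 \<le> CL / r powr L)"
    and A2: "\<forall>x. x \<noteq> 0 \<longrightarrow> p differentiable (at x)"
    and A3: "\<exists>e>0. bdd_above (p ` {-e<..<e})"
    and A4: "\<forall>j. ts $ j \<noteq> 0 \<longrightarrow> (AE \<omega> in M. \<forall>T\<in>TT. \<bar>al T j * xi T \<omega> j\<bar> \<le> c0)"
  shows "\<exists>CL'>0. \<exists>eL'. 0 < eL' \<and> eL' < 1 \<and>
              (\<forall>r>0. \<forall>T\<in>TT.
                 outer_prob M {\<omega> \<in> space M.
                   (SUP u\<in>Vset Th ts (al T) r.
                      ereal (Zfield (\<lambda>th. H T \<omega> th - penalty (xi T \<omega>) p th) ts (al T) u))
                     \<ge> ereal (exp (- (r powr (2 - eL'))))}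
                 \<le> CL' / r powr L)"
proof -
  obtain CL eL where CL: "CL > 0" and eL: "0 < eL" "eL < 1" and tail:
    "\<And>r T. r > 0 \<Longrightarrow> T \<in> TT \<Longrightarrow> outer_prob M (sup_tail_event M (\<lambda>\<omega>. Zfield (H T \<omega>) ts (al T))
        (Uset Th ts (al T)) r (exp (- (r powr (2 - eL))))) \<le> CL / r powr L"
    using A1 unfolding sup_tail_event_def Vset_def by blast
  obtain K where K: "K \<ge> 0" and penalty_drop: "\<And>xi al u. \<forall>j. xi j > 0 \<Longrightarrow>
      \<forall>j. ts $ j \<noteq> 0 \<longrightarrow> \<bar>al j * xi j\<bar> \<le> c0 \<Longrightarrow>
      penalty xi p ts - penalty xi p (ts + diag_scale al u) \<le> K * norm u"
    using penalty_drop_le_norm[of p c0 ts] p_nonneg p0 c0_pos A2 by force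
  define eL' where "eL' = (1 + eL) / 2"
  obtain R0 where R0: "R0 \<ge> 1" and growth: "\<And>s. s \<ge> R0 \<Longrightarrow>
      s powr (2 - eL') + (1 + 2 * K) * s \<le> s powr (2 - eL)"
    using powr_dominates_linear[of "2 - eL'" "2 - eL" "1 + 2 * K"] eL K unfolding eL'_def by auto
  have "AE \<omega> in M. \<forall>j. ts $ j \<noteq> 0 \<longrightarrow> (\<forall>T\<in>TT. \<bar>al T j * xi T \<omega> j\<bar> \<le> c0)"
    using A4 by (intro eventually_all_finite) auto
  then obtain N where N: "N \<in> null_sets M" and small:
    "\<And>\<omega> j T. \<omega> \<in> space M - N \<Longrightarrow> ts $ j \<noteq> 0 \<Longrightarrow> T \<in> TT \<Longrightarrow> \<bar>al T j * xi T \<omega> j\<bar> \<le> c0"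
    by (auto elim!: AE_E3)
  define CL' where "CL' = CL / (1 - 2 powr - L) + R0 powr L"
  have "outer_prob M (sup_tail_event M (\<lambda>\<omega>. Zfield (\<lambda>th. H T \<omega> th - penalty (xi T \<omega>) p th) ts (al T))
          (Uset Th ts (al T)) r (exp (- (r powr (2 - eL'))))) \<le> CL' / r powr L"
    if r: "r > 0" and T: "T \<in> TT" for r T
    unfolding CL'_def
  proof (rule sup_tail_bound_transfer[OF M bounded_Uset K N Zfield_diff_le tail growth R0])
    show "penalty (xi T \<omega>) p ts - penalty (xi T \<omega>) p (ts + diag_scale (al T) u) \<le> K * norm u"
      if "\<omega> \<in> space M - N" for \<omega> u
      using penalty_drop xi_pos small that T by auto
  qed (use Th_bdd al_nz T CL eL L_pos r in \<open>auto simp: eL'_def\<close>)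
  moreover have "CL' > 0"
    unfolding CL'_def using CL R0 L_pos powr_less_one[of 2 "- L"] by (simp add: add_pos_pos)
  moreover have "0 < eL'" "eL' < 1" using eL unfolding eL'_def by auto
  ultimately show ?thesis unfolding sup_tail_event_def Vset_def by blast
qed

end
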